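(* Let $n\in\mathbb{N}$. For every $\mathbf{p}=(\mathbf{p}_0,\dots,\mathbf{p}_{n-1})\in\mathbb{F}_2^{n}$, the $\mu_n$-measure of the set $\{r\in Q_n: p(r)_k=\mathbf{p}_k \text{ for all } 0\le k<n\}$ equals $2^{-n}$.
   Context: $\mathbb{F}_2((x^{-1}))$ is the field of formal series $r=\sum_{z\in\mathbb{Z}}a_zx^z$, $a_z\in\mathbb{F}_2$, with $a_z\ne0$ for only finitely many positive $z$; $\deg(r)=\max\{z:a_z\ne0\}$. The polynomial part is $[r]=\sum_{z\ge0}a_zx^z$. $S(r)=\frac{r}{x+1}$ if $[r](1)=0$ and $S(r)=\frac{xr}{x+1}$ if $[r](1)=1$; $p(r)_k=[S^k(r)](1)$. $Q_n=\{r:\deg(r)=n\}$ and $\mu_n$ is the probability measure on $Q_n$ under which the coefficients $a_{n-1},a_{n-2},\dots$ are independent and uniform in $\mathbb{F}_2$. *)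

theory Defs
  imports "HOL-Probability.Probability" "HOL-Library.Z2"
    "HOL-Computational_Algebra.Formal_Laurent_Series"
begin

text \<open>F_2((x^{-1})) is modelled as \<open>bit fls\<close> (Laurent series in X = x^{-1} over F_2,
  finitely many negative powers of X = finitely many positive powers of x).
  The coefficient a_z of x^z of r is \<open>fls_nth r (-z)\<close>; deg r = - fls_subdegree r.\<close>

definition xvar :: "bit fls" where
  "xvar = fls_X_inv"

definition deg2 :: "bit fls \<Rightarrow> int" where
  "deg2 r = - fls_subdegree r"

definition polypart_at1 :: "bit fls \<Rightarrow> bit" where
  "polypart_at1 r = (\<Sum>z\<in>{0..deg2 r}. fls_nth r (-z))"

definition Smap :: "bit fls \<Rightarrow> bit fls" where
  "Smap r = (if polypart_at1 r = 0 then r / (xvar + 1) else (xvar * r) / (xvar + 1))"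

definition pseq :: "bit fls \<Rightarrow> nat \<Rightarrow> bit" where
  "pseq r k = polypart_at1 ((Smap ^^ k) r)"

text \<open>Q_n = series of degree n. A sample of mu_n is described by the sequence of
  coefficients w j = a_{n-1-j} (j = 0,1,2,...); the series is
  x^n + sum_j w j x^{n-1-j}.\<close>
definition series_of :: "nat \<Rightarrow> (nat \<Rightarrow> bool) \<Rightarrow> bit fls" where
  "series_of n w = fls_shift (int n)
     (fps_to_fls (Abs_fps (\<lambda>i. if i = 0 then 1 else (if w (i - 1) then 1 else 0))))"

text \<open>The coefficient space: i.i.d. uniform bits; mu_n is the law of series_of n.\<close>
definition coin_space :: "(nat \<Rightarrow> bool) measure" where
  "coin_space = PiM UNIV (\<lambda>_::nat. measure_pmf (pmf_of_set (UNIV :: bool set)))"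

end

theory Submission
  imports Defs
begin

(* Write [r] for the polynomial part of r. Since (x + 1) S(r) is r or x r, comparing
   coefficients shows [S(r)] = T [r], where T P = P / (x + 1) if P(1) = 0 and
   T P = (x P + 1) / (x + 1) otherwise; hence p(r) only depends on [r], which for r in Q_n
   is the monic polynomial of degree n whose lower coefficients are the n coin flips.
   If two such polynomials have the same first n values of p, then at each step the
   difference of their T-iterates is divided by x + 1 and possibly multiplied by x, so
   (x + 1)^n divides their difference, which has degree < n and therefore vanishes.
   Thus the 2^n outcomes of the first n flips are mapped injectively, hence bijectively,
   onto F_2^n, and each event of the theorem is a single cylinder of measure 2^-n. *)

unbundle fps_syntax
declare add_bit_eq_xor [simp del] mult_bit_eq_and [simp del]

lemma neg_bit_poly: "- P = (P :: bit poly)"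
  by (rule poly_eqI) simp

lemma UNIV_bit: "(UNIV :: bit set) = {0, 1}"
  by auto

definition poly_step :: "bit poly \<Rightarrow> bit poly" where
  "poly_step P = (if poly P 1 = 0 then P else pCons 1 P) div [:1, 1:]"

lemma mult_poly_step: "[:1, 1:] * poly_step P = (if poly P 1 = 0 then P else pCons 1 P)"
proof -
  let ?Q = "if poly P 1 = 0 then P else pCons 1 P"
  have "poly ?Q 1 = 0"
    by simp
  then have "[:- 1, 1:] dvd ?Q"
    by (simp only: poly_eq_0_iff_dvd)
  then have "[:1, 1:] dvd ?Q"
    by simp
  then show ?thesis
    unfolding poly_step_def by (rule dvd_mult_div_cancel)
qed

lemma poly_step_add:
  assumes "poly P 1 = poly P' 1"
  shows "[:1, 1:] * (poly_step P + poly_step P') =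
    (if poly P 1 = 0 then P + P' else [:0, 1:] * (P + P'))"
  unfolding distrib_left mult_poly_step using assms by simp

lemma x_plus_1_power_dvd_x_times_iff:
  "[:1, 1:] ^ m dvd [:0, 1:] * Q \<longleftrightarrow> [:1, 1:] ^ m dvd (Q :: bit poly)"
proof (cases "Q = 0")
  case False
  have "order 1 ([:0, 1:] * Q) = order 1 [:0, 1 :: bit:] + order 1 Q"
    by (rule order_mult) (simp add: False)
  moreover have "order 1 [:0, 1 :: bit:] = 0"
    by (rule order_0I) simp
  ultimately show ?thesis
    using order_divides[of 1 m "[:0, 1:] * Q"] order_divides[of 1 m Q] False by simp
qed simp

lemma x_plus_1_power_dvd_add_if_poly_step_iterates_agree:
  assumes "\<forall>k<n. poly ((poly_step ^^ k) P) 1 = poly ((poly_step ^^ k) P') 1"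
  shows "[:1, 1:] ^ n dvd P + P'"
  using assms
proof (induction n arbitrary: P P')
  case 0
  show ?case by simp
next
  case (Suc n)
  have same: "poly P 1 = poly P' 1"
    using Suc.prems by (metis funpow_0 zero_less_Suc)
  have "\<forall>k<n. poly ((poly_step ^^ k) (poly_step P)) 1 = poly ((poly_step ^^ k) (poly_step P')) 1"
    using Suc.prems by (auto simp: funpow_Suc_right simp del: funpow.simps)
  then have "[:1, 1:] ^ n dvd poly_step P + poly_step P'"
    by (rule Suc.IH)
  then have "[:1, 1:] ^ Suc n dvd [:1, 1:] * (poly_step P + poly_step P')"
    unfolding power_Suc by (rule mult_dvd_mono[OF dvd_refl])
  then have "[:1, 1:] ^ Suc n dvd (if poly P 1 = 0 then P + P' else [:0, 1:] * (P + P'))"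
    unfolding poly_step_add[OF same] .
  then show ?case
    by (simp only: x_plus_1_power_dvd_x_times_iff split: if_splits)
qed

lemma eq_if_poly_step_iterates_agree:
  assumes high: "\<forall>i\<ge>n. coeff P i = coeff P' i"
    and agree: "\<forall>k<n. poly ((poly_step ^^ k) P) 1 = poly ((poly_step ^^ k) P') 1"
  shows "P = P'"
proof -
  have "P + P' = 0"
  proof (rule ccontr)
    assume nonzero: "P + P' \<noteq> 0"
    have "coeff (P + P') i = 0" if "i \<ge> n" for i
      using high that by simp
    then have "degree (P + P') < n"
      using nonzero by (metis leading_coeff_0_iff not_le)
    moreover have "n \<le> degree (P + P')"
      using dvd_imp_degree_le[OF x_plus_1_power_dvd_add_if_poly_step_iterates_agree[OF agree] nonzero]
      by (simp add: degree_linear_power)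
    ultimately show False
      by simp
  qed
  then show ?thesis
    by (metis add_eq_0_iff2 neg_bit_poly)
qed

(* fls_prpart omits the constant coefficient. *)
definition poly_part :: "bit fls \<Rightarrow> bit poly" where
  "poly_part r = fls_prpart r + [:r $$ 0:]"

lemma coeff_poly_part [simp]: "coeff (poly_part r) i = r $$ (- int i)"
  by (cases i) (simp_all add: poly_part_def)

lemma degree_poly_part: "degree (poly_part r) \<le> nat (deg2 r)"
  by (rule degree_le) (simp add: deg2_def)

lemma polypart_at1_eq_poly: "polypart_at1 r = poly (poly_part r) 1"
proof -
  have "polypart_at1 r = (\<Sum>i\<le>nat (deg2 r). coeff (poly_part r) i)"
  proof (cases "deg2 r < 0")
    case True
    then show ?thesis by (simp add: polypart_at1_def deg2_def)
  next
    case False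
    then have "{0..deg2 r} = int ` {0..nat (deg2 r)}"
      by (simp add: image_int_atLeastAtMost)
    then show ?thesis
      by (simp add: polypart_at1_def sum.reindex atLeast0AtMost)
  qed
  also have "\<dots> = (\<Sum>i\<le>degree (poly_part r). coeff (poly_part r) i)"
    by (rule sum.mono_neutral_right)
      (use degree_poly_part[of r] coeff_eq_0[of "poly_part r"] in auto)
  also have "\<dots> = poly (poly_part r) 1"
    by (simp add: poly_altdef)
  finally show ?thesis .
qed

lemma xvar_times_nth [simp]: "(xvar * f) $$ m = f $$ (m + 1)"
  by (simp add: xvar_def fls_X_inv_times_conv_shift)

lemma poly_part_xvar_times: "poly_part (xvar * r) = pCons (r $$ 1) (poly_part r)"
  by (rule poly_eqI) (auto simp: coeff_pCons split: nat.split)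

(* Only the coefficient of x^-1 (that is, s $$ 1) leaks into the polynomial part. *)
lemma x_plus_1_times_poly_part:
  assumes "(xvar + 1) * s = t"
  shows "[:1, 1:] * poly_part s = poly_part t + [:s $$ 1:]"
proof (rule poly_eqI)
  fix i
  have "t $$ m = s $$ (m + 1) + s $$ m" for m
    using assms[symmetric] by (simp add: distrib_right)
  then show "coeff ([:1, 1:] * poly_part s) i = coeff (poly_part t + [:s $$ 1:]) i"
    by (cases i) (simp_all add: coeff_pCons algebra_simps)
qed

lemma xvar_plus_1_nonzero: "xvar + 1 \<noteq> (0 :: bit fls)"
proof
  assume "xvar + 1 = (0 :: bit fls)"
  then have "(xvar + 1) $$ (-1) = (0 :: bit)" by simp
  then show False by (simp add: xvar_def)
qed

lemma poly_part_Smap: "poly_part (Smap r) = poly_step (poly_part r)"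
proof -
  let ?P = "poly_part r"
  define t where "t = (if poly ?P 1 = 0 then r else xvar * r)"
  have "(xvar + 1) * Smap r = t"
    using xvar_plus_1_nonzero by (simp add: Smap_def t_def polypart_at1_eq_poly)
  then have key: "[:1, 1:] * poly_part (Smap r) = poly_part t + [:Smap r $$ 1:]"
    by (rule x_plus_1_times_poly_part)
  \<comment> \<open>evaluating at x = 1 determines the leaked coefficient\<close>
  have "poly ([:1, 1:] * poly_part (Smap r)) 1 = 0"
    by (simp only: poly_mult) simp
  then have "poly (poly_part t) 1 + Smap r $$ 1 = 0"
    unfolding key by simp
  then have "Smap r $$ 1 = poly (poly_part t) 1"
    by (simp add: add_eq_0_iff2)
  moreover have "poly_part t + [:poly (poly_part t) 1:] = (if poly ?P 1 = 0 then ?P else pCons 1 ?P)"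
    by (cases "poly ?P 1 = 0") (simp_all add: t_def poly_part_xvar_times)
  ultimately have "[:1, 1:] * poly_part (Smap r) = [:1, 1:] * poly_step ?P"
    unfolding key mult_poly_step by simp
  then show ?thesis
    by (rule mult_left_cancel[THEN iffD1, rotated]) simp
qed

lemma pseq_eq_poly_step_iterate: "pseq r k = poly ((poly_step ^^ k) (poly_part r)) 1"
proof -
  have "poly_part ((Smap ^^ k) r) = (poly_step ^^ k) (poly_part r)"
    by (induction k) (simp_all add: poly_part_Smap)
  then show ?thesis
    by (simp add: pseq_def polypart_at1_eq_poly)
qed

lemma nth_series_of:
  "series_of n w $$ (- int i) =
    (if i = n then 1 else if i < n then of_bool (w (n - 1 - i)) else 0)"
proof -
  have "series_of n w $$ (- int i) =
      (if int n - int i < 0 then 0 else if nat (int n - int i) = 0 then 1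
       else of_bool (w (nat (int n - int i) - 1)))"
    by (simp add: series_of_def)
  then show ?thesis
    by (simp add: nat_diff_distrib)
qed

lemma poly_part_series_of_eq_iff:
  "poly_part (series_of n w) = poly_part (series_of n w') \<longleftrightarrow> (\<forall>j<n. w j = w' j)"
proof
  assume eq: "poly_part (series_of n w) = poly_part (series_of n w')"
  show "\<forall>j<n. w j = w' j"
  proof (intro allI impI)
    fix j assume "j < n"
    then have "n - 1 - j < n" "n - 1 - j \<noteq> n" "n - 1 - (n - 1 - j) = j"
      by auto
    then show "w j = w' j"
      using arg_cong[OF eq, of "\<lambda>P. coeff P (n - 1 - j)"]
      unfolding coeff_poly_part nth_series_of by (simp add: of_bool_eq_iff)
  qed
next
  assume "\<forall>j<n. w j = w' j"
  then show "poly_part (series_of n w) = poly_part (series_of n w')"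
    by (intro poly_eqI) (simp add: nth_series_of)
qed

lemma pseq_series_of_agree_iff:
  "(\<forall>k<n. pseq (series_of n w) k = pseq (series_of n w') k) \<longleftrightarrow> (\<forall>j<n. w j = w' j)"
proof
  assume "\<forall>k<n. pseq (series_of n w) k = pseq (series_of n w') k"
  then have "poly_part (series_of n w) = poly_part (series_of n w')"
    by (intro eq_if_poly_step_iterates_agree[of n])
      (simp_all add: nth_series_of pseq_eq_poly_step_iterate)
  then show "\<forall>j<n. w j = w' j"
    by (simp add: poly_part_series_of_eq_iff)
next
  assume "\<forall>j<n. w j = w' j"
  then show "\<forall>k<n. pseq (series_of n w) k = pseq (series_of n w') k"
    by (simp add: pseq_eq_poly_step_iterate poly_part_series_of_eq_iff[symmetric])
qed

lemma ex_pseq_series_of_cylinder: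
  "\<exists>b. \<forall>w. (\<forall>k<n. pseq (series_of n w) k = pp k) \<longleftrightarrow> (\<forall>j<n. w j = b j)"
proof -
  define V where "V = {..<n} \<rightarrow>\<^sub>E (UNIV :: bool set)"
  define W where "W = {..<n} \<rightarrow>\<^sub>E (UNIV :: bit set)"
  define code where "code w = (\<lambda>k\<in>{..<n}. pseq (series_of n w) k)" for w
  have code_eq_iff: "code w = code w' \<longleftrightarrow> (\<forall>j<n. w j = w' j)" for w w'
    unfolding pseq_series_of_agree_iff[symmetric] code_def restrict_def fun_eq_iff by auto
  have "inj_on code V"
  proof (rule inj_onI)
    fix v v' assume "v \<in> V" "v' \<in> V" "code v = code v'"
    then show "v = v'"
      unfolding V_def code_eq_iff by (intro PiE_ext) auto
  qed
  moreover have "code ` V \<subseteq> W"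
    by (rule image_subsetI) (simp add: W_def code_def restrict_PiE_iff)
  moreover have "card V = card W"
    by (simp add: V_def W_def card_PiE UNIV_bit numeral_2_eq_2)
  moreover have "finite W"
    by (simp add: W_def UNIV_bit finite_PiE)
  ultimately have "code ` V = W"
    by (intro card_subset_eq) (simp_all add: card_image)
  moreover have "restrict pp {..<n} \<in> W"
    by (simp add: W_def)
  ultimately obtain b where "code b = restrict pp {..<n}"
    by (metis imageE)
  then have "(\<forall>k<n. pseq (series_of n w) k = pp k) \<longleftrightarrow> (\<forall>j<n. w j = b j)" for w
    unfolding code_eq_iff[symmetric] by (auto simp: code_def restrict_def fun_eq_iff)
  then show ?thesis
    by blast
qed

lemma measure_coin_space_cylinder:
  "measure coin_space {w \<in> space coin_space. \<forall>j<n. w j = b j} = 1 / 2 ^ n"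
proof -
  let ?M = "measure_pmf (pmf_of_set (UNIV :: bool set))"
  have space: "space coin_space = UNIV"
    by (simp add: coin_space_def space_PiM PiE_UNIV_domain)
  have cylinder: "{w \<in> space coin_space. \<forall>j<n. w j = b j} =
      prod_emb UNIV (\<lambda>_. ?M) {..<n} (\<Pi>\<^sub>E j\<in>{..<n}. {b j})"
    by (rule set_eqI)
      (simp add: prod_emb_iff restrict_PiE_iff space space_PiM PiE_UNIV_domain Pi_iff Ball_def)
  have "emeasure coin_space {w \<in> space coin_space. \<forall>j<n. w j = b j} = (\<Prod>j<n. emeasure ?M {b j})"
    unfolding cylinder unfolding coin_space_def
    by (rule emeasure_PiM_emb) (simp_all add: prob_space_measure_pmf)
  also have "\<dots> = (\<Prod>j<n. ennreal (1 / 2))"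
    by (simp add: emeasure_pmf_single)
  also have "\<dots> = ennreal (\<Prod>j<n. 1 / 2)"
    by (rule prod_ennreal) simp
  finally show ?thesis
    by (simp add: measure_def power_one_over)
qed

theorem lemma2p8:
  fixes n :: nat and pp :: "nat \<Rightarrow> bit"
  shows "measure coin_space
           {w \<in> space coin_space. \<forall>k<n. pseq (series_of n w) k = pp k} = 1 / 2 ^ n"
proof -
  from ex_pseq_series_of_cylinder[of n pp] obtain b
    where cylinder: "\<forall>w. (\<forall>k<n. pseq (series_of n w) k = pp k) \<longleftrightarrow> (\<forall>j<n. w j = b j)" ..
  have "{w \<in> space coin_space. \<forall>k<n. pseq (series_of n w) k = pp k} =
      {w \<in> space coin_space. \<forall>j<n. w j = b j}"
    by (simp only: cylinder)
  then show ?thesis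
    by (simp only: measure_coin_space_cylinder)
qed

end
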